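(* Let $L>0$, let $P\in H^2(0,L)$ be real-valued with $P(x)\ge P^0>0$ on $[0,L]$, and let $\theta_1,\dots,\theta_4\in\mathbb R$. Let $\mathcal H=\{(w,v,\xi,\psi): w\in H^2(0,L),\ v\in H^1(0,L),\ \xi=v(L),\ \psi=v(0)\}$ with the norm induced from $H^2\times H^1\times\mathbb C\times\mathbb C$, let $F[w,v]=\theta_1v(0)+\theta_2v'(0)+\theta_3w(0)+\theta_4w'(0)$, and let $$D(A)=\{(w,v,\xi,\psi): w\in H^3(0,L),\ v\in H^2(0,L),\ \xi=v(L),\ \psi=v(0),\ (Pw')'(L)=-w'(L),\ (Pw')'(0)=F[w,v]\}.$$ Then $D(A)$ is dense in $\mathcal H$.
   Context: Prime denotes $d/dx$; functions are complex-valued. $D(A)$ is the domain of the operator $A(w,v,\xi,\psi)=(v,(Pw')',-w'(L),F[w,v])$. *)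

theory Defs
  imports "HOL-Analysis.Analysis"
begin

definition L2_on :: "real \<Rightarrow> (real \<Rightarrow> complex) \<Rightarrow> bool" where
  "L2_on L g \<longleftrightarrow> set_borel_measurable lborel {0..L} g \<and>
     set_integrable lborel {0..L} (\<lambda>x. (cmod (g x))^2)"

definition has_weak_deriv_on :: "real \<Rightarrow> (real \<Rightarrow> complex) \<Rightarrow> (real \<Rightarrow> complex) \<Rightarrow> bool" where
  "has_weak_deriv_on L f g \<longleftrightarrow> L2_on L g \<and>
     (\<forall>x\<in>{0..L}. f x = f 0 + (LINT t:{0..x}|lborel. g t))"

definition deriv_chain :: "nat \<Rightarrow> real \<Rightarrow> (real \<Rightarrow> complex) \<Rightarrow> (nat \<Rightarrow> real \<Rightarrow> complex) \<Rightarrow> bool" where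
  "deriv_chain k L f ds \<longleftrightarrow> (\<forall>x\<in>{0..L}. ds 0 x = f x) \<and>
     (\<forall>j<k. has_weak_deriv_on L (ds j) (ds (Suc j))) \<and> L2_on L (ds k)"

text \<open>Sobolev space H^k(0,L) (functions identified with their continuous representatives
  up to order k-1).\<close>
definition sobolev :: "nat \<Rightarrow> real \<Rightarrow> (real \<Rightarrow> complex) set" where
  "sobolev k L = {f. \<exists>ds. deriv_chain k L f ds}"

definition wderiv :: "nat \<Rightarrow> real \<Rightarrow> nat \<Rightarrow> (real \<Rightarrow> complex) \<Rightarrow> real \<Rightarrow> complex" where
  "wderiv k L j f = (SOME ds. deriv_chain k L f ds) j"

definition sobolev_norm :: "nat \<Rightarrow> real \<Rightarrow> (real \<Rightarrow> complex) \<Rightarrow> real" where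
  "sobolev_norm k L f = sqrt (\<Sum>j\<le>k. LINT x:{0..L}|lborel. (cmod (wderiv k L j f x))^2)"

end

theory Submission
  imports Defs
begin

text \<open>Approximate the highest derivative of each component in L^2 by a polynomial and
  integrate back, keeping the values at 0 through the constants of integration. The errors then
  vanish at 0 together with their lower derivatives, so a Poincare inequality bounds their whole
  Sobolev norm, and their value at L, by the L^2 error of the top derivative. The boundary
  conditions of D(A) only prescribe w''(0) and a linear relation between w'(L) and w''(L); they are
  enforced by adding to the polynomial approximating w'' boundary layers
  alpha (1 - x/L)^n + beta (x/L)^n, whose squared L^2 norm is O(1/n) while the required
  coefficients stay bounded.\<close>

section \<open>Square-integrable functions\<close>

definition L2_sqnorm :: "real \<Rightarrow> (real \<Rightarrow> complex) \<Rightarrow> real" where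
  "L2_sqnorm L f = (LINT x:{0..L}|lborel. (cmod (f x))^2)"

lemma L2_sqnorm_nonneg: "0 \<le> L2_sqnorm L f"
  unfolding L2_sqnorm_def set_lebesgue_integral_def by (auto intro!: integral_nonneg)

lemma set_integrable_Icc_const: "set_integrable lborel {a..b::real} (\<lambda>x. c::real)"
  unfolding set_integrable_def by (intro borel_integrable_compact) auto

lemma set_integral_Icc_const: "0 \<le> L \<Longrightarrow> (LINT x:{0..L}|lborel. (c::real)) = c * L"
  by (subst set_integral_const) (auto simp: emeasure_lborel_Icc_eq)

lemma set_integral_Icc_le_const:
  fixes F :: "real \<Rightarrow> real"
  assumes "set_integrable lborel {0..L} F" "\<forall>x\<in>{0..L}. F x \<le> c" "0 \<le> L"
  shows "(LINT x:{0..L}|lborel. F x) \<le> c * L"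
proof -
  have "(LINT x:{0..L}|lborel. F x) \<le> (LINT x:{0..L}|lborel. c)"
    using assms by (intro set_integral_mono set_integrable_Icc_const) auto
  with assms(3) show ?thesis by (simp add: set_integral_Icc_const)
qed

text \<open>Cauchy-Schwarz against the constant 1, via the nonnegativity of the variance of F.\<close>
lemma set_integral_Icc_sq_le:
  fixes F :: "real \<Rightarrow> real"
  assumes F: "set_integrable lborel {0..L} F" and F2: "set_integrable lborel {0..L} (\<lambda>x. (F x)^2)"
    and L: "0 < L"
  shows "(LINT x:{0..L}|lborel. F x)^2 \<le> L * (LINT x:{0..L}|lborel. (F x)^2)"
proof -
  define I where "I = (LINT x:{0..L}|lborel. F x)"
  define c where "c = I / L"
  have "0 \<le> (LINT x:{0..L}|lborel. (F x - c)^2)"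
    unfolding set_lebesgue_integral_def by (auto intro!: integral_nonneg)
  also have "\<dots> = (LINT x:{0..L}|lborel. (F x)^2 - 2 * c * F x + c^2)"
    by (simp add: power2_diff algebra_simps)
  also have "\<dots> = (LINT x:{0..L}|lborel. (F x)^2) - 2 * c * I + c^2 * L"
    using F F2 L by (simp add: set_integrable_Icc_const set_integral_Icc_const I_def)
  also have "\<dots> = (LINT x:{0..L}|lborel. (F x)^2) - I^2 / L"
    using L by (simp add: c_def field_simps power2_eq_square)
  finally show ?thesis
    using L by (simp add: I_def field_simps)
qed

lemma set_borel_measurable_norm_sq:
  fixes f :: "real \<Rightarrow> complex"
  assumes "set_borel_measurable lborel S f"
  shows "set_borel_measurable lborel S (\<lambda>x. (cmod (f x))^2)"
proof -
  have "(\<lambda>x. indicator S x *\<^sub>R (cmod (f x))^2) = (\<lambda>x. (cmod (indicator S x *\<^sub>R f x))^2)"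
    by (auto simp: indicator_def fun_eq_iff)
  moreover have "(\<lambda>x. (cmod (indicator S x *\<^sub>R f x))^2) \<in> borel_measurable lborel"
    using assms unfolding set_borel_measurable_def by measurable
  ultimately show ?thesis unfolding set_borel_measurable_def by simp
qed

lemma L2_on_continuous:
  assumes "continuous_on {0..L} g"
  shows "L2_on L g"
  unfolding L2_on_def
proof
  show "set_borel_measurable lborel {0..L} g"
    unfolding set_borel_measurable_def
    using borel_measurable_continuous_on_indicator[OF _ assms] by simp
  have "continuous_on {0..L} (\<lambda>x. (cmod (g x))^2)"
    by (intro continuous_intros assms)
  then show "set_integrable lborel {0..L} (\<lambda>x. (cmod (g x))^2)"
    unfolding set_integrable_def by (intro borel_integrable_compact) auto
qed

lemma L2_on_bounded:
  assumes "B \<in> borel_measurable lborel" "\<forall>x. cmod (B x) \<le> M"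
  shows "L2_on L B"
  unfolding L2_on_def
proof
  show sb: "set_borel_measurable lborel {0..L} B"
    using assms(1) unfolding set_borel_measurable_def by measurable
  show "set_integrable lborel {0..L} (\<lambda>x. (cmod (B x))^2)"
  proof (rule set_integrable_bound[OF set_integrable_Icc_const[of 0 L "M^2"]])
    show "set_borel_measurable lborel {0..L} (\<lambda>x. (cmod (B x))^2)"
      using sb by (rule set_borel_measurable_norm_sq)
    have "(cmod (B x))^2 \<le> M^2" for x
      using assms(2) norm_ge_zero power_mono by blast
    then show "AE x in lborel. x \<in> {0..L} \<longrightarrow> norm ((cmod (B x))^2) \<le> norm (M^2)"
      by simp
  qed
qed

lemma L2_on_imp_set_integrable:
  assumes "L2_on L g"
  shows "set_integrable lborel {0..L} g"
proof (rule set_integrable_bound)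
  show "set_integrable lborel {0..L} (\<lambda>x. 1 + (cmod (g x))^2)"
    using assms set_integrable_Icc_const[of 0 L 1] unfolding L2_on_def by auto
  show "set_borel_measurable lborel {0..L} g"
    using assms unfolding L2_on_def by auto
  have "t \<le> 1 + t^2" for t :: real
  proof -
    have "0 \<le> (t - 1)^2 + t^2 + 1" by simp
    then show ?thesis by (simp add: power2_diff)
  qed
  then show "AE x in lborel. x \<in> {0..L} \<longrightarrow> norm (g x) \<le> norm (1 + (cmod (g x))\<^sup>2)"
    by auto
qed

lemma norm_add_sq_le: "(cmod (a + b))^2 \<le> 2 * (cmod a)^2 + 2 * (cmod b)^2"
proof -
  have "(cmod (a + b))^2 \<le> (cmod a + cmod b)^2"
    using norm_triangle_ineq[of a b] by (intro power_mono) auto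
  also have "\<dots> \<le> 2 * (cmod a)^2 + 2 * (cmod b)^2"
    using zero_le_power2[of "cmod a - cmod b"] by (simp add: power2_diff power2_sum)
  finally show ?thesis .
qed

lemma norm_diff_sq_le: "(cmod (a - c))^2 \<le> 2 * (cmod (a - b))^2 + 2 * (cmod (b - c))^2"
  using norm_add_sq_le[of "a - b" "b - c"] by simp

lemma L2_on_diff:
  assumes "L2_on L a" "L2_on L b"
  shows "L2_on L (\<lambda>x. a x - b x)"
  unfolding L2_on_def
proof
  show m: "set_borel_measurable lborel {0..L} (\<lambda>x. a x - b x)"
    using assms unfolding L2_on_def set_borel_measurable_def
    by (auto simp: scaleR_diff_right intro: borel_measurable_diff)
  show "set_integrable lborel {0..L} (\<lambda>x. (cmod (a x - b x))^2)"
  proof (rule set_integrable_bound)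
    show "set_integrable lborel {0..L} (\<lambda>x. 2 * (cmod (a x))^2 + 2 * (cmod (b x))^2)"
      using assms unfolding L2_on_def by (intro set_integral_add set_integrable_mult_right) auto
    show "set_borel_measurable lborel {0..L} (\<lambda>x. (cmod (a x - b x))^2)"
      using m by (rule set_borel_measurable_norm_sq)
    have "(cmod (a x - b x))^2 \<le> 2 * (cmod (a x))^2 + 2 * (cmod (b x))^2" for x
      using norm_add_sq_le[of "a x" "- b x"] by simp
    then show "AE x in lborel. x \<in> {0..L} \<longrightarrow>
        norm ((cmod (a x - b x))^2) \<le> norm (2 * (cmod (a x))^2 + 2 * (cmod (b x))^2)"
      by auto
  qed
qed

lemma L2_sqnorm_triangle:
  assumes a: "L2_on L a" and b: "L2_on L b" and c: "L2_on L c"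
  shows "L2_sqnorm L (\<lambda>x. a x - c x) \<le>
    2 * L2_sqnorm L (\<lambda>x. a x - b x) + 2 * L2_sqnorm L (\<lambda>x. b x - c x)"
proof -
  have i: "set_integrable lborel {0..L} (\<lambda>x. (cmod (f x - g x))^2)"
    if "L2_on L f" "L2_on L g" for f g
    using L2_on_diff[OF that] unfolding L2_on_def by blast
  have "L2_sqnorm L (\<lambda>x. a x - c x) \<le>
      (LINT x:{0..L}|lborel. 2 * (cmod (a x - b x))^2 + 2 * (cmod (b x - c x))^2)"
    unfolding L2_sqnorm_def
    using i[OF a c] i[OF a b] i[OF b c] norm_diff_sq_le by (intro set_integral_mono) auto
  also have "\<dots> = 2 * L2_sqnorm L (\<lambda>x. a x - b x) + 2 * L2_sqnorm L (\<lambda>x. b x - c x)"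
    unfolding L2_sqnorm_def using i[OF a b] i[OF b c]
    by (subst set_integral_add(2)) (auto intro: set_integrable_mult_right)
  finally show ?thesis .
qed

lemma L2_sqnorm_le_pointwise:
  assumes "L2_on L E" "\<forall>x\<in>{0..L}. (cmod (E x))^2 \<le> B" "0 \<le> L"
  shows "L2_sqnorm L E \<le> B * L"
  using assms unfolding L2_on_def L2_sqnorm_def by (intro set_integral_Icc_le_const) auto

section \<open>Weak derivatives\<close>

lemma continuous_on_set_integral_Icc:
  fixes h :: "real \<Rightarrow> complex"
  assumes "set_integrable lborel {0..L} h"
  shows "continuous_on {0..L} (\<lambda>x. LINT t:{0..x}|lborel. h t)"
proof -
  have "continuous_on {0..L} (\<lambda>x. integral {0..x} h)"
    using set_borel_integral_eq_integral(1)[OF assms] by (rule indefinite_integral_continuous_1)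
  moreover have "(LINT t:{0..x}|lborel. h t) = integral {0..x} h" if "x \<in> {0..L}" for x
    using that by (intro set_borel_integral_eq_integral(2) set_integrable_subset[OF assms]) auto
  ultimately show ?thesis
    using continuous_on_eq by force
qed

lemma has_weak_deriv_on_imp_continuous:
  assumes "has_weak_deriv_on L f g"
  shows "continuous_on {0..L} f"
proof -
  have "continuous_on {0..L} (\<lambda>x. f 0 + (LINT t:{0..x}|lborel. g t))"
    using assms unfolding has_weak_deriv_on_def
    by (intro continuous_intros continuous_on_set_integral_Icc L2_on_imp_set_integrable) blast
  moreover have "\<And>x. x \<in> {0..L} \<Longrightarrow> f 0 + (LINT t:{0..x}|lborel. g t) = f x"
    using assms unfolding has_weak_deriv_on_def by metis
  ultimately show ?thesis using continuous_on_eq by blast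
qed

lemma has_weak_deriv_on_diff:
  assumes "has_weak_deriv_on L a a'" "has_weak_deriv_on L b b'"
  shows "has_weak_deriv_on L (\<lambda>x. a x - b x) (\<lambda>x. a' x - b' x)"
  unfolding has_weak_deriv_on_def
proof
  have la: "L2_on L a'" and lb: "L2_on L b'"
    using assms unfolding has_weak_deriv_on_def by auto
  then show "L2_on L (\<lambda>x. a' x - b' x)" by (rule L2_on_diff)
  show "\<forall>x\<in>{0..L}. a x - b x = a 0 - b 0 + (LINT t:{0..x}|lborel. a' t - b' t)"
  proof
    fix x assume x: "x \<in> {0..L}"
    have "set_integrable lborel {0..x} a'" "set_integrable lborel {0..x} b'"
      using x by (auto intro!: set_integrable_subset[OF L2_on_imp_set_integrable] la lb)
    moreover have "a x = a 0 + (LINT t:{0..x}|lborel. a' t)" "b x = b 0 + (LINT t:{0..x}|lborel. b' t)"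
      using assms x unfolding has_weak_deriv_on_def by blast+
    ultimately show "a x - b x = a 0 - b 0 + (LINT t:{0..x}|lborel. a' t - b' t)"
      by simp
  qed
qed

lemma has_weak_deriv_on_if_has_vector_derivative:
  fixes f f' :: "real \<Rightarrow> complex"
  assumes "0 \<le> L" "\<forall>x\<in>{0..L}. (f has_vector_derivative f' x) (at x within {0..L})"
    "continuous_on {0..L} f'"
  shows "has_weak_deriv_on L f f'"
  unfolding has_weak_deriv_on_def
proof
  show "L2_on L f'" using assms(3) by (rule L2_on_continuous)
  show "\<forall>x\<in>{0..L}. f x = f 0 + (LINT t:{0..x}|lborel. f' t)"
  proof
    fix x assume x: "x \<in> {0..L}"
    then have sub: "{0..x} \<subseteq> {0..L}" by auto
    have "(f' has_integral (f x - f 0)) {0..x}"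
      using x sub assms(2) by (intro fundamental_theorem_of_calculus)
        (auto intro: has_vector_derivative_within_subset[OF _ sub])
    moreover have "set_integrable lborel {0..x} f'"
      unfolding set_integrable_def
      by (intro borel_integrable_compact continuous_on_subset[OF assms(3) sub]) auto
    ultimately show "f x = f 0 + (LINT t:{0..x}|lborel. f' t)"
      by (simp add: set_borel_integral_eq_integral(2) integral_unique)
  qed
qed

lemma has_weak_deriv_on_integral:
  fixes f :: "real \<Rightarrow> complex"
  assumes "continuous_on {0..L} f" "0 \<le> L"
  shows "has_weak_deriv_on L (\<lambda>x. c + integral {0..x} f) f"
  using integral_has_vector_derivative[OF assms(1)]
  by (intro has_weak_deriv_on_if_has_vector_derivative assms) (auto intro!: derivative_eq_intros)

lemma deriv_chain_diff:
  assumes "deriv_chain k L f ds" "deriv_chain k L g es"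
  shows "deriv_chain k L (\<lambda>x. f x - g x) (\<lambda>j x. ds j x - es j x)"
  using assms unfolding deriv_chain_def by (auto intro: has_weak_deriv_on_diff L2_on_diff)

lemma deriv_chain_le:
  assumes "deriv_chain k L f ds" "j \<le> k"
  shows "deriv_chain j L f ds"
proof (cases "j = k")
  case False
  then have "has_weak_deriv_on L (ds j) (ds (Suc j))"
    using assms unfolding deriv_chain_def by auto
  then have "L2_on L (ds j)"
    by (intro L2_on_continuous has_weak_deriv_on_imp_continuous)
  then show ?thesis using assms unfolding deriv_chain_def by auto
qed (use assms in simp)

lemma deriv_chain_polynomial:
  assumes "polynomial_function f" "0 \<le> L"
  obtains ds where "deriv_chain 1 L f ds" "ds 0 = f"
proof -
  obtain f' where f': "polynomial_function f'" "\<And>x. (f has_vector_derivative f' x) (at x)"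
    using has_vector_derivative_polynomial_function[OF assms(1)] by blast
  then have "has_weak_deriv_on L f f'"
    using assms(2) by (intro has_weak_deriv_on_if_has_vector_derivative)
      (auto intro: has_vector_derivative_at_within continuous_on_polymonial_function)
  moreover have "L2_on L f'"
    using f' by (intro L2_on_continuous continuous_on_polymonial_function)
  ultimately have "deriv_chain 1 L f (\<lambda>j. if j = 0 then f else f')"
    unfolding deriv_chain_def by auto
  then show ?thesis using that by fastforce
qed

lemma deriv_chain_primitive:
  fixes c :: complex
  assumes "deriv_chain k L f ds" "ds 0 = f" "continuous_on {0..L} f" "0 \<le> L"
  defines "F \<equiv> \<lambda>x. c + integral {0..x} f"
  shows "deriv_chain (Suc k) L F (case_nat F ds)"
  unfolding deriv_chain_def
proof (intro conjI allI impI ballI)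
  fix j assume "j < Suc k"
  then show "has_weak_deriv_on L (case_nat F ds j) (case_nat F ds (Suc j))"
    using assms has_weak_deriv_on_integral unfolding deriv_chain_def
    by (cases j) auto
qed (use assms in \<open>auto simp: deriv_chain_def\<close>)

lemma deriv_chain_primitive_polynomial:
  fixes c :: complex
  assumes f: "polynomial_function f" and L: "0 \<le> L"
  defines "F \<equiv> \<lambda>x. c + integral {0..x} f"
  obtains ds where "deriv_chain 2 L F ds" "ds 0 = F" "ds 1 = f"
proof -
  obtain fs where "deriv_chain 1 L f fs" "fs 0 = f"
    by (rule deriv_chain_polynomial[OF f L])
  then have "deriv_chain 2 L F (case_nat F fs)"
    using deriv_chain_primitive[of 1 L f fs c] f L unfolding F_def
    by (simp add: numeral_2_eq_2 continuous_on_polymonial_function)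
  with \<open>fs 0 = f\<close> show ?thesis using that by simp
qed

section \<open>Uniqueness of weak derivatives\<close>

definition steklov_average :: "real \<Rightarrow> (real \<Rightarrow> complex) \<Rightarrow> real \<Rightarrow> complex" where
  "steklov_average t f x = integral {x..x + t} f /\<^sub>R t"

lemma AE_lborel_not_in_negligible:
  assumes "negligible N"
  shows "AE x in lborel. x \<notin> N"
proof -
  have "AE x in lebesgue. x \<notin> N"
    using assms by (auto simp: eventually_ae_filter_negligible)
  then show ?thesis by (simp add: AE_completion_iff)
qed

lemma steklov_average_LIMSEQ_AE:
  assumes "\<And>a b. f integrable_on {a..b}"
  shows "AE x in lborel. (\<lambda>n. steklov_average (1 / Suc n) f x) \<longlonglongrightarrow> f x"
proof -
  obtain N where N: "negligible N"
    and conv: "\<And>x e. \<lbrakk>x \<notin> N; 0 < e\<rbrakk> \<Longrightarrow>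
               \<exists>d>0. \<forall>h. 0 < h \<and> h < d \<longrightarrow>
                         norm (integral (cbox x (x + h *\<^sub>R One)) f /\<^sub>R h ^ DIM(real) - f x) < e"
    using integrable_ccontinuous_explicit[of f] assms by auto
  have "(\<lambda>n. steklov_average (1 / Suc n) f x) \<longlonglongrightarrow> f x" if x: "x \<notin> N" for x
    unfolding LIMSEQ_iff
  proof (intro allI impI)
    fix r :: real assume "r > 0"
    then obtain d where d: "d > 0" and dd: "\<And>h. 0 < h \<and> h < d \<Longrightarrow>
        norm (integral {x..x + h} f /\<^sub>R h - f x) < r"
      using conv[OF x] by auto
    obtain n0 :: nat where "1 / d < real n0" using reals_Archimedean2 by blast
    have "1 / Suc n < d" if "n0 \<le> n" for n
    proof -
      have "1 / d < real (Suc n)" using \<open>1 / d < real n0\<close> that by linarith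
      then show ?thesis using d by (simp add: field_simps)
    qed
    then show "\<exists>n0. \<forall>n\<ge>n0. norm (steklov_average (1 / Suc n) f x - f x) < r"
      using dd unfolding steklov_average_def by (metis of_nat_0_less_iff zero_less_Suc zero_less_divide_1_iff)
  qed
  then show ?thesis
    using AE_lborel_not_in_negligible[OF N] by (auto elim: eventually_mono)
qed

lemma steklov_average_eq_diff:
  assumes "\<And>a b. f integrable_on {a..b}" "0 \<le> x" "0 \<le> t"
  shows "steklov_average t f x = (integral {0..x + t} f - integral {0..x} f) /\<^sub>R t"
proof -
  have "integral {0..x} f + integral {x..x + t} f = integral {0..x + t} f"
    using assms by (intro Henstock_Kurzweil_Integration.integral_combine) auto
  then have "integral {x..x + t} f = integral {0..x + t} f - integral {0..x} f"
    by (simp add: algebra_simps)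
  then show ?thesis
    unfolding steklov_average_def by simp
qed

text \<open>Lebesgue differentiation: the Steklov averages of h vanish inside (0, L) and
  converge to h almost everywhere.\<close>
lemma AE_zero_if_set_integrals_zero:
  fixes h :: "real \<Rightarrow> complex"
  assumes hi: "set_integrable lborel {0..L} h"
    and h0: "\<forall>x\<in>{0..L}. (LINT t:{0..x}|lborel. h t) = 0"
  shows "AE x in lborel. x \<in> {0..L} \<longrightarrow> h x = 0"
proof -
  define f where "f = (\<lambda>x. indicator {0..L} x *\<^sub>R h x)"
  have "f integrable_on UNIV"
    using hi unfolding set_integrable_def f_def by (rule integrable_on_lborel)
  then have fI: "f integrable_on {a..b}" for a b
    using integrable_on_subcbox[of f UNIV a b] by simp
  have I0: "integral {0..y} f = 0" if "y \<in> {0..L}" for y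
  proof -
    have "integral {0..y} f = integral {0..y} h"
      using that by (intro integral_cong) (auto simp: f_def)
    also have "\<dots> = (LINT t:{0..y}|lborel. h t)"
      using that by (intro set_borel_integral_eq_integral(2)[symmetric] set_integrable_subset[OF hi]) auto
    finally show ?thesis using h0 that by simp
  qed
  have hz: "h x = 0" if x: "x \<in> {0<..<L}" and lim: "(\<lambda>n. steklov_average (1 / Suc n) f x) \<longlonglongrightarrow> f x" for x
  proof -
    have "(\<lambda>n. 1 / real (Suc n)) \<longlonglongrightarrow> 0"
      by (rule LIMSEQ_Suc[OF lim_1_over_n])
    then have "eventually (\<lambda>n. 1 / real (Suc n) < L - x) sequentially"
      using x by (intro order_tendstoD(2)) auto
    then have "eventually (\<lambda>n. steklov_average (1 / Suc n) f x = 0) sequentially"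
      by (rule eventually_mono) (use x I0 in \<open>auto simp: steklov_average_eq_diff[OF fI]\<close>)
    then have "(\<lambda>n. steklov_average (1 / Suc n) f x) \<longlonglongrightarrow> 0"
      by (rule tendsto_eventually)
    with lim have "f x = 0" by (rule LIMSEQ_unique)
    with x show ?thesis by (simp add: f_def)
  qed
  moreover have "AE x in lborel. x \<notin> {0, L}"
    by (rule AE_lborel_not_in_negligible) simp
  ultimately show ?thesis
    using steklov_average_LIMSEQ_AE[OF fI] by eventually_elim (auto intro: hz)
qed

lemma continuous_AE_zero_imp_zero:
  fixes d :: "real \<Rightarrow> complex"
  assumes c: "continuous_on {0..L} d" and L: "0 < L"
    and ae: "AE x in lborel. x \<in> {0..L} \<longrightarrow> d x = 0"
  shows "\<forall>x\<in>{0..L}. d x = 0"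
proof -
  have cg: "continuous_on {0..L} (\<lambda>x. cmod (d x))" by (intro continuous_intros c)
  have "(LINT x:{0..L}|lborel. cmod (d x)) = 0"
    unfolding set_lebesgue_integral_def
    by (rule integral_eq_zero_AE, rule eventually_mono[OF ae]) (auto simp: indicator_def)
  moreover have "set_integrable lborel {0..L} (\<lambda>x. cmod (d x))"
    unfolding set_integrable_def by (intro borel_integrable_compact cg) auto
  ultimately have "integral {0..L} (\<lambda>x. cmod (d x)) = 0"
    by (simp add: set_borel_integral_eq_integral(2))
  then show ?thesis
    using integral_eq_0_iff[OF cg L] by simp
qed

lemma deriv_chain_unique:
  assumes ds: "deriv_chain k L f ds" and es: "deriv_chain k L f es" and L: "0 < L"
    and "j \<le> k"
  shows "(AE x in lborel. x \<in> {0..L} \<longrightarrow> ds j x = es j x)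
    \<and> (j < k \<longrightarrow> (\<forall>x\<in>{0..L}. ds j x = es j x))"
  using \<open>j \<le> k\<close>
proof (induction j)
  case 0
  then show ?case using ds es unfolding deriv_chain_def by simp
next
  case (Suc j)
  then have eqj: "\<forall>x\<in>{0..L}. ds j x - es j x = 0" by simp
  have hdiff: "has_weak_deriv_on L (\<lambda>x. ds j x - es j x) (\<lambda>x. ds (Suc j) x - es (Suc j) x)"
    using deriv_chain_diff[OF ds es] Suc.prems unfolding deriv_chain_def by simp
  have "\<forall>x\<in>{0..L}. (LINT t:{0..x}|lborel. ds (Suc j) t - es (Suc j) t) = 0"
  proof
    fix x assume x: "x \<in> {0..L}"
    then have "ds j x - es j x = ds j 0 - es j 0 + (LINT t:{0..x}|lborel. ds (Suc j) t - es (Suc j) t)"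
      using hdiff unfolding has_weak_deriv_on_def by blast
    then show "(LINT t:{0..x}|lborel. ds (Suc j) t - es (Suc j) t) = 0"
      using eqj x L by simp
  qed
  then have ae: "AE x in lborel. x \<in> {0..L} \<longrightarrow> ds (Suc j) x - es (Suc j) x = 0"
    using hdiff unfolding has_weak_deriv_on_def
    by (intro AE_zero_if_set_integrals_zero L2_on_imp_set_integrable) auto
  have "\<forall>x\<in>{0..L}. ds (Suc j) x - es (Suc j) x = 0" if "Suc j < k"
  proof (rule continuous_AE_zero_imp_zero[OF _ L ae])
    have "has_weak_deriv_on L (ds (Suc j)) (ds (Suc (Suc j)))"
      "has_weak_deriv_on L (es (Suc j)) (es (Suc (Suc j)))"
      using ds es that unfolding deriv_chain_def by auto
    then show "continuous_on {0..L} (\<lambda>x. ds (Suc j) x - es (Suc j) x)"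
      by (intro continuous_intros has_weak_deriv_on_imp_continuous)
  qed
  with ae show ?case by auto
qed

lemma wderiv_eq_deriv_chain:
  assumes "deriv_chain k L f ds" "0 < L" "j < k" "x \<in> {0..L}"
  shows "wderiv k L j f x = ds j x"
proof -
  have "deriv_chain k L f (SOME ds. deriv_chain k L f ds)"
    using someI[of "deriv_chain k L f", OF assms(1)] .
  from deriv_chain_unique[OF this assms(1,2), of j] assms(3,4) show ?thesis
    unfolding wderiv_def by simp
qed

lemma sobolev_norm_eq_deriv_chain:
  assumes ds: "deriv_chain k L f ds" and L: "0 < L"
  shows "sobolev_norm k L f = sqrt (\<Sum>j\<le>k. L2_sqnorm L (ds j))"
proof -
  define es where "es = (SOME ds. deriv_chain k L f ds)"
  have es: "deriv_chain k L f es"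
    unfolding es_def using someI[of "deriv_chain k L f", OF ds] .
  have "L2_sqnorm L (es j) = L2_sqnorm L (ds j)" if "j \<le> k" for j
  proof -
    have "L2_on L (es j)" "L2_on L (ds j)"
      using deriv_chain_le[OF es that] deriv_chain_le[OF ds that] unfolding deriv_chain_def by auto
    then have "integrable lborel (\<lambda>x. indicator {0..L} x *\<^sub>R (cmod (es j x))^2)"
      "integrable lborel (\<lambda>x. indicator {0..L} x *\<^sub>R (cmod (ds j x))^2)"
      unfolding L2_on_def set_integrable_def by auto
    moreover have ae: "AE x in lborel. x \<in> {0..L} \<longrightarrow> es j x = ds j x"
      using deriv_chain_unique[OF es ds L that] by blast
    ultimately show ?thesis
      unfolding L2_sqnorm_def set_lebesgue_integral_def
      by (intro integral_cong_AE borel_measurable_integrable) (auto simp: indicator_def elim!: eventually_mono[OF ae])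
  qed
  then show ?thesis
    unfolding sobolev_norm_def wderiv_def L2_sqnorm_def es_def[symmetric] by simp
qed

section \<open>Density of polynomials in L^2\<close>

lemma L2_truncation_approx:
  fixes g :: "real \<Rightarrow> complex"
  assumes g: "L2_on L g" and e: "e > 0"
  obtains M where "M > 0" "L2_sqnorm L (\<lambda>x. g x - (if cmod (g x) \<le> M then g x else 0)) < e"
proof -
  define G where "G = (\<lambda>x. indicator {0..L} x *\<^sub>R g x)"
  have Gm: "G \<in> borel_measurable lborel"
    using g unfolding L2_on_def set_borel_measurable_def G_def by simp
  define F where "F = (\<lambda>(n::nat) x. if cmod (G x) \<le> real n then 0 else (cmod (G x))^2)"
  have eqF: "L2_sqnorm L (\<lambda>x. g x - (if cmod (g x) \<le> real n then g x else 0)) = integral\<^sup>L lborel (F n)"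
    for n
    unfolding L2_sqnorm_def set_lebesgue_integral_def
    by (rule Bochner_Integration.integral_cong) (auto simp: F_def G_def indicator_def)
  have "(\<lambda>n. integral\<^sup>L lborel (F n)) \<longlonglongrightarrow> integral\<^sup>L lborel (\<lambda>x::real. 0::real)"
  proof (rule integral_dominated_convergence[where w = "\<lambda>x. (cmod (G x))^2"])
    show "F n \<in> borel_measurable lborel" for n
      unfolding F_def using Gm by measurable
    have "(\<lambda>x. (cmod (G x))^2) = (\<lambda>x. indicator {0..L} x *\<^sub>R (cmod (g x))^2)"
      by (auto simp: G_def indicator_def fun_eq_iff)
    then show "integrable lborel (\<lambda>x. (cmod (G x))^2)"
      using g unfolding L2_on_def set_integrable_def by simp
    show "AE x in lborel. (\<lambda>n. F n x) \<longlonglongrightarrow> 0"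
    proof (rule AE_I2)
      fix x
      have "eventually (\<lambda>n. F n x = 0) sequentially"
        using eventually_ge_at_top[of "nat \<lceil>cmod (G x)\<rceil>"]
        by (rule eventually_mono) (auto simp: F_def nat_le_iff intro: order_trans[OF le_of_int_ceiling])
      then show "(\<lambda>n. F n x) \<longlonglongrightarrow> 0" by (rule tendsto_eventually)
    qed
    show "AE x in lborel. norm (F n x) \<le> (cmod (G x))^2" for n
      by (rule AE_I2) (auto simp: F_def)
  qed simp
  then have "eventually (\<lambda>n. integral\<^sup>L lborel (F n) < e) sequentially"
    using e by (intro order_tendstoD(2)) auto
  then have "eventually (\<lambda>n. 1 \<le> n \<and> integral\<^sup>L lborel (F n) < e) sequentially"
    using eventually_ge_at_top[of 1] by (simp add: eventually_conj_iff)
  then obtain N where N: "\<forall>n\<ge>N. 1 \<le> n \<and> integral\<^sup>L lborel (F n) < e"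
    unfolding eventually_sequentially by blast
  then have "0 < real N" "integral\<^sup>L lborel (F N) < e" by auto
  then show ?thesis using that[of "real N"] eqF[of N] by simp
qed

lemma steklov_average_continuous:
  assumes f: "\<And>a b. f integrable_on {a..b}" and t: "0 < t"
  shows "continuous_on {0..L} (steklov_average t f)"
proof -
  define \<Phi> where "\<Phi> = (\<lambda>y. integral {0..y} f)"
  have \<Phi>: "continuous_on {0..L + t} \<Phi>"
    unfolding \<Phi>_def by (rule indefinite_integral_continuous_1[OF f])
  have "continuous_on {0..L} (\<lambda>x. (\<Phi> (x + t) - \<Phi> x) /\<^sub>R t)"
    using t by (intro continuous_intros continuous_on_compose2[OF \<Phi>] continuous_on_subset[OF \<Phi>]) auto
  then show ?thesis
    by (rule continuous_on_eq) (use t in \<open>simp add: steklov_average_eq_diff[OF f] \<Phi>_def\<close>)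
qed

lemma steklov_average_norm_le:
  assumes f: "\<And>a b. f integrable_on {a..b}" and M: "\<forall>x. cmod (f x) \<le> M" and t: "0 < t"
  shows "cmod (steklov_average t f x) \<le> M"
proof -
  have "0 \<le> M" using M norm_ge_zero order_trans by blast
  then have "norm (integral {x..x + t} f) \<le> M * Henstock_Kurzweil_Integration.content {x..x + t}"
    using f[of x "x + t"] M by (intro has_integral_bound_real[where S = "{}"]) auto
  then show ?thesis
    using t unfolding steklov_average_def by (simp add: field_simps)
qed

lemma integrable_on_Icc_if_bounded_support:
  fixes B :: "real \<Rightarrow> complex"
  assumes Bm: "B \<in> borel_measurable lborel" and Bb: "\<forall>x. cmod (B x) \<le> M"
    and B0: "\<forall>x. x \<notin> {0..L} \<longrightarrow> B x = 0"
  shows "B integrable_on {a..b}"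
proof -
  have M0: "0 \<le> M" using Bb norm_ge_zero order_trans by blast
  have "integrable lborel B"
  proof (rule Bochner_Integration.integrable_bound)
    show "integrable lborel (\<lambda>x. indicator {0..L} x *\<^sub>R M)"
      by (intro borel_integrable_compact) auto
    show "AE x in lborel. norm (B x) \<le> norm (indicator {0..L} x *\<^sub>R M)"
      using Bb B0 M0 by (intro AE_I2) (auto simp: indicator_def)
  qed (rule Bm)
  then have "B integrable_on UNIV" by (rule integrable_on_lborel)
  then show ?thesis
    using integrable_on_subcbox[of B UNIV a b] by simp
qed

lemma steklov_average_L2_tendsto:
  fixes B :: "real \<Rightarrow> complex"
  assumes Bm: "B \<in> borel_measurable lborel" and Bb: "\<forall>x. cmod (B x) \<le> M"
    and B0: "\<forall>x. x \<notin> {0..L} \<longrightarrow> B x = 0"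
  shows "(\<lambda>n. L2_sqnorm L (\<lambda>x. B x - steklov_average (1 / Suc n) B x)) \<longlonglongrightarrow> 0"
proof -
  note BI = integrable_on_Icc_if_bounded_support[OF Bm Bb B0]
  define S where "S = (\<lambda>n. steklov_average (1 / Suc n) B)"
  have Sc: "continuous_on {0..L} (S n)" for n
    unfolding S_def by (rule steklov_average_continuous[OF BI]) simp
  have Sb: "cmod (S n x) \<le> M" for n x
    unfolding S_def by (rule steklov_average_norm_le[OF BI Bb]) simp
  define H where "H = (\<lambda>n x. (cmod (B x - indicator {0..L} x *\<^sub>R S n x))^2)"
  have eqH: "L2_sqnorm L (\<lambda>x. B x - S n x) = integral\<^sup>L lborel (H n)" for n
    unfolding L2_sqnorm_def set_lebesgue_integral_def
    by (rule Bochner_Integration.integral_cong) (auto simp: H_def indicator_def B0)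
  have "(\<lambda>n. integral\<^sup>L lborel (H n)) \<longlonglongrightarrow> integral\<^sup>L lborel (\<lambda>x::real. 0::real)"
  proof (rule integral_dominated_convergence[where w = "\<lambda>x. indicator {0..L} x *\<^sub>R (2 * M)^2"])
    show "H n \<in> borel_measurable lborel" for n
    proof -
      have "(\<lambda>x. indicator {0..L} x *\<^sub>R S n x) \<in> borel_measurable borel"
        by (rule borel_measurable_continuous_on_indicator[OF _ Sc]) auto
      then show ?thesis unfolding H_def using Bm by measurable
    qed
    show "integrable lborel (\<lambda>x. indicator {0..L} x *\<^sub>R (2 * M)^2)"
      by (intro borel_integrable_compact) auto
    show "AE x in lborel. (\<lambda>n. H n x) \<longlonglongrightarrow> 0"
      using steklov_average_LIMSEQ_AE[OF BI]
    proof eventually_elim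
      case (elim x)
      then have "(\<lambda>n. (cmod (B x - S n x))^2) \<longlonglongrightarrow> (cmod (B x - B x))^2"
        unfolding S_def by (intro tendsto_intros)
      then show ?case by (cases "x \<in> {0..L}") (auto simp: H_def B0)
    qed
    show "AE x in lborel. norm (H n x) \<le> indicator {0..L} x *\<^sub>R (2 * M)^2" for n
    proof (rule AE_I2)
      fix x
      have "cmod (B x - S n x) \<le> 2 * M"
        using norm_triangle_ineq4[of "B x" "S n x"] spec[OF Bb, of x] Sb[of n x] by linarith
      then have "(cmod (B x - S n x))^2 \<le> (2 * M)^2" by (intro power_mono) auto
      then show "norm (H n x) \<le> indicator {0..L} x *\<^sub>R (2 * M)^2"
        by (cases "x \<in> {0..L}") (auto simp: H_def B0)
    qed
  qed simp
  then show ?thesis unfolding eqH[symmetric] S_def by simp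
qed

text \<open>Truncate to a bounded function, smooth it by a Steklov average, then apply
  Weierstrass approximation.\<close>
lemma polynomial_L2_dense:
  fixes g :: "real \<Rightarrow> complex"
  assumes g: "L2_on L g" and e: "e > 0" and L: "L > 0"
  obtains p where "polynomial_function p" "L2_sqnorm L (\<lambda>x. g x - p x) < e"
proof -
  obtain M where M: "M > 0"
    and gM: "L2_sqnorm L (\<lambda>x. g x - (if cmod (g x) \<le> M then g x else 0)) < e/16"
    using L2_truncation_approx[OF g, of "e/16"] e by auto
  define G where "G = (\<lambda>x. indicator {0..L} x *\<^sub>R g x)"
  have Gm: "G \<in> borel_measurable lborel"
    using g unfolding L2_on_def set_borel_measurable_def G_def by simp
  define B where "B = (\<lambda>x. if cmod (G x) \<le> M then G x else 0)"
  have Bm: "B \<in> borel_measurable lborel" unfolding B_def using Gm by measurable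
  have Bb: "\<forall>x. cmod (B x) \<le> M" using M unfolding B_def by auto
  have B0: "\<forall>x. x \<notin> {0..L} \<longrightarrow> B x = 0" unfolding B_def G_def by auto
  have lB: "L2_on L B" using Bm Bb by (rule L2_on_bounded)
  have gB: "L2_sqnorm L (\<lambda>x. g x - B x) < e/16"
    using gM unfolding L2_sqnorm_def B_def G_def by (subst set_lebesgue_integral_cong) auto
  have "eventually (\<lambda>n. L2_sqnorm L (\<lambda>x. B x - steklov_average (1 / Suc n) B x) < e/16) sequentially"
    using steklov_average_L2_tendsto[OF Bm Bb B0] e by (intro order_tendstoD(2)) auto
  then obtain n where Bq: "L2_sqnorm L (\<lambda>x. B x - steklov_average (1 / Suc n) B x) < e/16"
    using eventually_happens'[OF sequentially_bot] by blast
  define q where "q = steklov_average (1 / Suc n) B"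
  have qc: "continuous_on {0..L} q"
    unfolding q_def using integrable_on_Icc_if_bounded_support[OF Bm Bb B0]
    by (rule steklov_average_continuous) simp
  note Bq = Bq[folded q_def]
  define \<eta> where "\<eta> = min 1 (e / (16 * (L + 1)))"
  have \<eta>: "0 < \<eta>" "\<eta> \<le> 1" "\<eta> \<le> e / (16 * (L + 1))"
    unfolding \<eta>_def using e L by auto
  obtain p where p: "polynomial_function p" and pq: "\<forall>x\<in>{0..L}. norm (q x - p x) < \<eta>"
    using Stone_Weierstrass_polynomial_function[OF _ qc \<eta>(1)] by auto
  have lp: "L2_on L p"
    using p by (intro L2_on_continuous continuous_on_polymonial_function)
  have lq: "L2_on L q" using qc by (rule L2_on_continuous)
  have "L2_sqnorm L (\<lambda>x. q x - p x) \<le> \<eta>^2 * L"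
    using pq L2_on_diff[OF lq lp] L by (intro L2_sqnorm_le_pointwise) (auto intro!: power_mono)
  also have "\<dots> \<le> \<eta> * L" using \<eta> L by (simp add: power2_eq_square mult_left_le)
  also have "\<dots> \<le> e / (16 * (L + 1)) * L" using \<eta> L by (intro mult_right_mono) auto
  also have "\<dots> < e/16" using e L by (simp add: field_simps)
  finally have qp: "L2_sqnorm L (\<lambda>x. q x - p x) < e/16" .
  have "L2_sqnorm L (\<lambda>x. g x - p x) < e"
    using L2_sqnorm_triangle[OF g lB lp] L2_sqnorm_triangle[OF lB lq lp] gB Bq qp e by linarith
  with p that show ?thesis by blast
qed

section \<open>Poincare inequality\<close>

lemma set_integral_Icc_mono_upper:
  fixes F :: "real \<Rightarrow> real"
  assumes "set_integrable lborel {0..L} F" "\<forall>y. 0 \<le> F y" "x \<in> {0..L}"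
  shows "(LINT t:{0..x}|lborel. F t) \<le> (LINT t:{0..L}|lborel. F t)"
  unfolding set_lebesgue_integral_def
proof (rule integral_mono)
  show "integrable lborel (\<lambda>t. indicator {0..L} t *\<^sub>R F t)"
    using assms(1) unfolding set_integrable_def .
  have "set_integrable lborel {0..x} F"
    using assms(3) by (intro set_integrable_subset[OF assms(1)]) auto
  then show "integrable lborel (\<lambda>t. indicator {0..x} t *\<^sub>R F t)"
    unfolding set_integrable_def .
  show "indicator {0..x} t *\<^sub>R F t \<le> indicator {0..L} t *\<^sub>R F t" for t
    using assms(2,3) by (auto simp: indicator_def)
qed

lemma has_weak_deriv_on_norm_sq_le:
  assumes hw: "has_weak_deriv_on L E D" and E0: "E 0 = 0" and x: "x \<in> {0..L}" and L: "0 < L"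
  shows "(cmod (E x))^2 \<le> L * L2_sqnorm L D"
proof -
  have D: "L2_on L D" using hw unfolding has_weak_deriv_on_def by blast
  then have iD: "set_integrable lborel {0..L} D" by (rule L2_on_imp_set_integrable)
  have "E x = E 0 + (LINT t:{0..x}|lborel. D t)"
    using hw x unfolding has_weak_deriv_on_def by blast
  then have "cmod (E x) = cmod (LINT t:{0..x}|lborel. D t)" using E0 by simp
  also have "\<dots> \<le> (LINT t:{0..x}|lborel. cmod (D t))"
    using x by (intro set_integral_norm_bound set_integrable_subset[OF iD]) auto
  also have "\<dots> \<le> (LINT t:{0..L}|lborel. cmod (D t))"
    using x by (intro set_integral_Icc_mono_upper set_integrable_norm iD) auto
  finally have "(cmod (E x))^2 \<le> (LINT t:{0..L}|lborel. cmod (D t))^2"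
    by (intro power_mono) auto
  also have "\<dots> \<le> L * L2_sqnorm L D"
    unfolding L2_sqnorm_def using D L
    by (intro set_integral_Icc_sq_le set_integrable_norm iD) (auto simp: L2_on_def)
  finally show ?thesis .
qed

lemma L2_sqnorm_le_poincare:
  assumes hw: "has_weak_deriv_on L E D" and E0: "E 0 = 0" and L: "0 < L"
  shows "L2_sqnorm L E \<le> L^2 * L2_sqnorm L D"
proof -
  have "L2_sqnorm L E \<le> (L * L2_sqnorm L D) * L"
    using hw E0 L by (intro L2_sqnorm_le_pointwise L2_on_continuous has_weak_deriv_on_imp_continuous
      ballI has_weak_deriv_on_norm_sq_le) auto
  then show ?thesis by (simp add: power2_eq_square mult_ac)
qed

lemma sobolev_norm_sq_le_top_derivative:
  assumes ds: "deriv_chain k L f ds" and ds0: "\<forall>j<k. ds j 0 = 0" and L: "0 < L"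
  shows "(sobolev_norm k L f)^2 \<le> (\<Sum>j\<le>k. L^(2*j)) * L2_sqnorm L (ds k)"
proof -
  have down: "L2_sqnorm L (ds (k - i)) \<le> L^(2*i) * L2_sqnorm L (ds k)" if "i \<le> k" for i
    using that
  proof (induction i)
    case (Suc i)
    then have "Suc (k - Suc i) = k - i" "k - Suc i < k" by auto
    then have "has_weak_deriv_on L (ds (k - Suc i)) (ds (k - i))"
      using ds unfolding deriv_chain_def by metis
    then have "L2_sqnorm L (ds (k - Suc i)) \<le> L^2 * L2_sqnorm L (ds (k - i))"
      using ds0 \<open>k - Suc i < k\<close> L by (intro L2_sqnorm_le_poincare) auto
    also have "\<dots> \<le> L^2 * (L^(2*i) * L2_sqnorm L (ds k))"
      using Suc L by (intro mult_left_mono) auto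
    finally show ?case by (simp add: power_add power2_eq_square mult_ac)
  qed simp
  have "(sobolev_norm k L f)^2 = (\<Sum>j\<le>k. L2_sqnorm L (ds j))"
    unfolding sobolev_norm_eq_deriv_chain[OF ds L] by (simp add: sum_nonneg L2_sqnorm_nonneg)
  also have "\<dots> = (\<Sum>i\<le>k. L2_sqnorm L (ds (k - i)))"
    using sum.nat_diff_reindex[of "\<lambda>j. L2_sqnorm L (ds j)" "Suc k"]
    by (simp add: lessThan_Suc_atMost)
  also have "\<dots> \<le> (\<Sum>i\<le>k. L^(2*i) * L2_sqnorm L (ds k))"
    using down by (intro sum_mono) auto
  finally show ?thesis by (simp add: sum_distrib_right)
qed

section \<open>Boundary layers\<close>

lemma has_integral_ramp_power:
  assumes L: "0 < L"
  shows "((\<lambda>x. (x/L)^k) has_integral L / Suc k) {0..L}"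
    and "((\<lambda>x. (1 - x/L)^k) has_integral L / Suc k) {0..L}"
proof -
  have "((\<lambda>x. L / Suc k * (x/L)^Suc k) has_real_derivative (x/L)^k) (at x)" for x
  proof -
    have "((\<lambda>x. x/L) has_real_derivative 1/L) (at x)"
      using L by (auto intro!: derivative_eq_intros)
    from DERIV_cmult[OF DERIV_power[OF this, of "Suc k"], of "L / Suc k"]
    show ?thesis using L by (simp del: of_nat_Suc)
  qed
  then show "((\<lambda>x. (x/L)^k) has_integral L / Suc k) {0..L}"
    using fundamental_theorem_of_calculus[of 0 L "\<lambda>x. L / Suc k * (x/L)^Suc k" "\<lambda>x. (x/L)^k"] L
    by (simp add: has_real_derivative_iff_has_vector_derivative has_vector_derivative_at_within)
  have "((\<lambda>x. - L / Suc k * (1 - x/L)^Suc k) has_real_derivative (1 - x/L)^k) (at x)" for x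
  proof -
    have "((\<lambda>x. 1 - x/L) has_real_derivative - 1/L) (at x)"
      using L by (auto intro!: derivative_eq_intros)
    from DERIV_cmult[OF DERIV_power[OF this, of "Suc k"], of "- L / Suc k"]
    show ?thesis using L by (simp del: of_nat_Suc)
  qed
  then show "((\<lambda>x. (1 - x/L)^k) has_integral L / Suc k) {0..L}"
    using fundamental_theorem_of_calculus[of 0 L "\<lambda>x. - L / Suc k * (1 - x/L)^Suc k" "\<lambda>x. (1 - x/L)^k"] L
    by (simp add: has_real_derivative_iff_has_vector_derivative has_vector_derivative_at_within)
qed

definition boundary_layer :: "real \<Rightarrow> nat \<Rightarrow> complex \<Rightarrow> complex \<Rightarrow> real \<Rightarrow> complex" where
  "boundary_layer L n \<alpha> \<beta> x = (1 - x/L)^n *\<^sub>R \<alpha> + (x/L)^n *\<^sub>R \<beta>"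

lemma boundary_layer_0: "0 < n \<Longrightarrow> boundary_layer L n \<alpha> \<beta> 0 = \<alpha>"
  by (simp add: boundary_layer_def)

lemma boundary_layer_right: "0 < n \<Longrightarrow> L \<noteq> 0 \<Longrightarrow> boundary_layer L n \<alpha> \<beta> L = \<beta>"
  by (simp add: boundary_layer_def)

lemma polynomial_function_boundary_layer: "polynomial_function (boundary_layer L n \<alpha> \<beta>)"
proof -
  have "real_polynomial_function (\<lambda>x::real. (1 - x/L)^n)" "real_polynomial_function (\<lambda>x::real. (x/L)^n)"
    by (intro real_polynomial_function_power real_polynomial_function_diff
        real_polynomial_function_divide; simp add: real_polynomial_function_eq)+
  then show ?thesis
    unfolding boundary_layer_def real_polynomial_function_eq
    by (intro polynomial_function_add polynomial_function_mult) auto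
qed

lemma has_integral_boundary_layer:
  assumes "0 < L"
  shows "(boundary_layer L n \<alpha> \<beta> has_integral (L / Suc n) *\<^sub>R (\<alpha> + \<beta>)) {0..L}"
  unfolding boundary_layer_def scaleR_add_right
  using has_integral_ramp_power[OF assms, of n] by (intro has_integral_add has_integral_scaleR_left)

lemma L2_sqnorm_boundary_layer:
  assumes L: "0 < L"
  shows "L2_sqnorm L (boundary_layer L n \<alpha> \<beta>) \<le> 2 * ((cmod \<alpha>)^2 + (cmod \<beta>)^2) * L / Suc (2*n)"
proof -
  have int: "set_integrable lborel {0..L} f" if "continuous_on {0..L} f" for f :: "real \<Rightarrow> real"
    unfolding set_integrable_def using that by (intro borel_integrable_compact) auto
  have LINT: "(LINT x:{0..L}|lborel. f x) = L / Suc (2*n)"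
    if "(f has_integral L / Suc (2*n)) {0..L}" "continuous_on {0..L} f" for f
    using that by (simp add: set_borel_integral_eq_integral(2)[OF int] integral_unique)
  have ramp: "(LINT x:{0..L}|lborel. (1 - x/L)^(2*n)) = L / Suc (2*n)"
    "(LINT x:{0..L}|lborel. (x/L)^(2*n)) = L / Suc (2*n)"
    using L by (intro LINT has_integral_ramp_power; auto intro!: continuous_intros)+
  have "L2_sqnorm L (boundary_layer L n \<alpha> \<beta>)
      \<le> (LINT x:{0..L}|lborel. 2 * (cmod \<alpha>)^2 * (1 - x/L)^(2*n) + 2 * (cmod \<beta>)^2 * (x/L)^(2*n))"
    unfolding L2_sqnorm_def boundary_layer_def
  proof (rule set_integral_mono)
    show "set_integrable lborel {0..L} (\<lambda>x. (cmod ((1 - x/L)^n *\<^sub>R \<alpha> + (x/L)^n *\<^sub>R \<beta>))^2)"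
      "set_integrable lborel {0..L} (\<lambda>x. 2 * (cmod \<alpha>)^2 * (1 - x/L)^(2*n) + 2 * (cmod \<beta>)^2 * (x/L)^(2*n))"
      using L by (auto intro!: int continuous_intros)
    show "(cmod ((1 - x/L)^n *\<^sub>R \<alpha> + (x/L)^n *\<^sub>R \<beta>))^2
        \<le> 2 * (cmod \<alpha>)^2 * (1 - x/L)^(2*n) + 2 * (cmod \<beta>)^2 * (x/L)^(2*n)" for x
      using norm_add_sq_le[of "(1 - x/L)^n *\<^sub>R \<alpha>" "(x/L)^n *\<^sub>R \<beta>"]
      by (simp add: power_mult_distrib power_mult power2_abs mult_ac)
  qed
  also have "\<dots> = 2 * (cmod \<alpha>)^2 * (L / Suc (2*n)) + 2 * (cmod \<beta>)^2 * (L / Suc (2*n))"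
    using L by (subst set_integral_add(2)) (auto intro!: int continuous_intros simp: ramp)
  also have "\<dots> = 2 * ((cmod \<alpha>)^2 + (cmod \<beta>)^2) * L / Suc (2*n)"
    by (simp add: ring_distribs add_divide_distrib)
  finally show ?thesis .
qed

text \<open>The layers contribute only O(1/n) to the integral of f, so the coefficient beta solving the
  boundary condition converges as n tends to infinity, and the L^2 cost of the correction tends to 0.\<close>
lemma boundary_layer_correction:
  fixes p :: "real \<Rightarrow> complex" and \<rho> a c :: complex and PL :: real
  assumes p: "polynomial_function p" and L: "0 < L" and PL: "0 < PL" and e: "0 < e"
  obtains f :: "real \<Rightarrow> complex" where "polynomial_function f" "f 0 = a"
    "\<rho> * (c + integral {0..L} f) + PL * f L = 0" "L2_sqnorm L (\<lambda>x. p x - f x) < e"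
proof -
  define \<alpha> where "\<alpha> = a - p 0"
  define Ip where "Ip = integral {0..L} p"
  define m where "m = (\<lambda>n::nat. L / Suc n)"
  define den where "den = (\<lambda>n. \<rho> * m n + PL)"
  define \<beta> where "\<beta> = (\<lambda>n. - (\<rho> * (c + Ip + m n * \<alpha>) + PL * p L) / den n)"
  define bound where "bound = (\<lambda>n. 2 * ((cmod \<alpha>)^2 + (cmod (\<beta> n))^2) * L * (1 / Suc (2*n)))"
  have mr: "m \<longlonglongrightarrow> 0"
    unfolding m_def by (rule LIMSEQ_Suc[OF lim_const_over_n])
  then have m: "(\<lambda>n. complex_of_real (m n)) \<longlonglongrightarrow> 0"
    using tendsto_of_real by fastforce
  then have den: "den \<longlonglongrightarrow> complex_of_real PL"
    unfolding den_def using mr by (auto intro!: tendsto_eq_intros)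
  then have "\<beta> \<longlonglongrightarrow> - (\<rho> * (c + Ip + 0 * \<alpha>) + PL * p L) / PL"
    unfolding \<beta>_def using m PL by (intro tendsto_intros) auto
  moreover have "(\<lambda>n. 1 / real (Suc (2*n))) \<longlonglongrightarrow> 0"
    using LIMSEQ_subseq_LIMSEQ[OF LIMSEQ_Suc[OF lim_1_over_n], of "\<lambda>n. 2*n"]
    by (simp add: strict_mono_def o_def)
  ultimately have "bound \<longlonglongrightarrow> 2 * ((cmod \<alpha>)^2 + (cmod (- (\<rho> * (c + Ip + 0 * \<alpha>) + PL * p L) / PL))^2) * L * 0"
    unfolding bound_def by (intro tendsto_intros)
  then have "eventually (\<lambda>n. bound n < e) sequentially"
    using e by (intro order_tendstoD(2)) auto
  moreover have "eventually (\<lambda>n. den n \<noteq> 0) sequentially"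
    using den PL by (intro tendsto_imp_eventually_ne) auto
  ultimately have "eventually (\<lambda>n. 0 < n \<and> bound n < e \<and> den n \<noteq> 0) sequentially"
    using eventually_gt_at_top[of 0] by eventually_elim auto
  then obtain n where n: "0 < n" "bound n < e" "den n \<noteq> 0"
    using eventually_happens'[OF sequentially_bot] by blast
  define f where "f = (\<lambda>x. p x + boundary_layer L n \<alpha> (\<beta> n) x)"
  have poly: "polynomial_function f"
    unfolding f_def using p polynomial_function_boundary_layer by (rule polynomial_function_add)
  have f0: "f 0 = a"
    unfolding f_def \<alpha>_def using n by (simp add: boundary_layer_0)
  have "(f has_integral Ip + m n *\<^sub>R (\<alpha> + \<beta> n)) {0..L}"
    unfolding f_def Ip_def m_def using p has_integral_boundary_layer[OF L]
    by (intro has_integral_add integrable_integral integrable_continuous_real continuous_on_polymonial_function)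
  then have "\<rho> * (c + integral {0..L} f) + PL * f L = (\<rho> * (c + Ip + m n * \<alpha>) + PL * p L) + \<beta> n * den n"
    using n L unfolding f_def den_def
    by (simp add: integral_unique scaleR_conv_of_real boundary_layer_right algebra_simps)
  also have "\<dots> = 0"
    using n(3) unfolding \<beta>_def by simp
  finally have bc: "\<rho> * (c + integral {0..L} f) + PL * f L = 0" .
  have "L2_sqnorm L (\<lambda>x. p x - f x) = L2_sqnorm L (boundary_layer L n \<alpha> (\<beta> n))"
    unfolding L2_sqnorm_def f_def by simp
  also have "\<dots> < e"
    using L2_sqnorm_boundary_layer[OF L, of n \<alpha> "\<beta> n"] n unfolding bound_def by simp
  finally show ?thesis by (rule that[OF poly f0 bc])
qed

section \<open>Approximation by smoother functions\<close>

lemma mult_less_of_less_divide: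
  fixes X :: real
  assumes "0 \<le> X" "X < e / C" "0 < C" "c \<le> C"
  shows "c * X < e"
proof -
  have "c * X \<le> C * X" using assms by (intro mult_right_mono)
  also have "\<dots> < e" using assms by (simp add: less_divide_eq mult.commute)
  finally show ?thesis .
qed

lemma sobolev_norm_diff_sq_le:
  assumes "deriv_chain k L f ds" "deriv_chain k L g es" "\<forall>j<k. ds j 0 = es j 0" "0 < L"
  shows "(sobolev_norm k L (\<lambda>x. f x - g x))^2
    \<le> (\<Sum>j\<le>k. L^(2*j)) * L2_sqnorm L (\<lambda>x. ds k x - es k x)"
  using sobolev_norm_sq_le_top_derivative[OF deriv_chain_diff[OF assms(1,2)]] assms(3,4) by simp

lemma sobolev_1_approx_by_sobolev_2:
  assumes v: "v \<in> sobolev 1 L" and L: "0 < L" and e: "0 < e"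
  obtains v1 where "v1 \<in> sobolev 2 L" "v1 0 = v 0"
    "(sobolev_norm 1 L (\<lambda>x. v x - v1 x))^2 < e" "(cmod (v L - v1 L))^2 < e"
proof -
  obtain dv where dv: "deriv_chain 1 L v dv"
    using v unfolding sobolev_def by blast
  define \<delta> where "\<delta> = e / (L^2 + L + 1)"
  have C: "0 < L^2 + L + 1" using L by (simp add: add_pos_pos)
  then have "0 < \<delta>" unfolding \<delta>_def using e by simp
  then obtain r where r: "polynomial_function r" and rv: "L2_sqnorm L (\<lambda>x. dv 1 x - r x) < \<delta>"
    using polynomial_L2_dense[of L "dv 1"] dv L unfolding deriv_chain_def by auto
  have rv0: "0 \<le> L2_sqnorm L (\<lambda>x. dv 1 x - r x)" by (rule L2_sqnorm_nonneg)
  define v1 where "v1 = (\<lambda>x. v 0 + integral {0..x} r)"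
  obtain vs where vs: "deriv_chain 2 L v1 vs" "vs 0 = v1" "vs 1 = r"
    unfolding v1_def using L by (metis deriv_chain_primitive_polynomial[OF r] less_imp_le)
  have dv0: "dv 0 0 = v 0" "dv 0 L = v L"
    using dv L unfolding deriv_chain_def by auto
  have "(sobolev_norm 1 L (\<lambda>x. v x - v1 x))^2 \<le> (1 + L^2) * L2_sqnorm L (\<lambda>x. dv 1 x - r x)"
    using sobolev_norm_diff_sq_le[OF dv deriv_chain_le[OF vs(1)] _ L] dv0 vs(2,3)
    by (simp add: v1_def)
  also have "\<dots> < e"
    using rv rv0 L C unfolding \<delta>_def by (intro mult_less_of_less_divide[where C = "L^2 + L + 1"]) auto
  finally have norm: "(sobolev_norm 1 L (\<lambda>x. v x - v1 x))^2 < e" .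
  have "has_weak_deriv_on L (\<lambda>x. dv 0 x - vs 0 x) (\<lambda>x. dv 1 x - vs 1 x)"
    using dv vs(1) unfolding deriv_chain_def by (auto intro: has_weak_deriv_on_diff)
  then have "(cmod (dv 0 L - vs 0 L))^2 \<le> L * L2_sqnorm L (\<lambda>x. dv 1 x - vs 1 x)"
    using dv0 vs(2) L by (intro has_weak_deriv_on_norm_sq_le) (auto simp: v1_def)
  then have "(cmod (v L - v1 L))^2 \<le> L * L2_sqnorm L (\<lambda>x. dv 1 x - r x)"
    using dv0 vs(2,3) by simp
  also have "\<dots> < e"
    using rv rv0 L C unfolding \<delta>_def by (intro mult_less_of_less_divide[where C = "L^2 + L + 1"]) auto
  finally have trace: "(cmod (v L - v1 L))^2 < e" .
  show ?thesis
    by (rule that[OF _ _ norm trace]) (use vs(1) in \<open>auto simp: sobolev_def v1_def\<close>)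
qed

lemma sobolev_2_approx_by_sobolev_3:
  fixes \<rho> a :: complex and PL :: real
  assumes w: "w \<in> sobolev 2 L" and L: "0 < L" and PL: "0 < PL" and e: "0 < e"
  obtains w1 where "w1 \<in> sobolev 3 L" "w1 0 = w 0" "wderiv 3 L 1 w1 0 = wderiv 2 L 1 w 0"
    "wderiv 3 L 2 w1 0 = a" "\<rho> * wderiv 3 L 1 w1 L + PL * wderiv 3 L 2 w1 L = 0"
    "(sobolev_norm 2 L (\<lambda>x. w x - w1 x))^2 < e"
proof -
  obtain dw where dw: "deriv_chain 2 L w dw"
    using w unfolding sobolev_def by blast
  define c1 where "c1 = dw 1 0"
  define \<delta> where "\<delta> = e / (L^4 + L^2 + 1)"
  have C: "0 < L^4 + L^2 + 1" using L by (simp add: add_pos_pos)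
  then have \<delta>: "0 < \<delta>/4" unfolding \<delta>_def using e by simp
  have dw2: "L2_on L (dw 2)" using dw unfolding deriv_chain_def by simp
  obtain p where p: "polynomial_function p" and pw: "L2_sqnorm L (\<lambda>x. dw 2 x - p x) < \<delta>/4"
    by (rule polynomial_L2_dense[OF dw2 \<delta> L])
  obtain f :: "real \<Rightarrow> complex" where f: "polynomial_function f" "f 0 = a"
    and bc: "\<rho> * (c1 + integral {0..L} f) + PL * f L = 0" and pf: "L2_sqnorm L (\<lambda>x. p x - f x) < \<delta>/4"
    by (rule boundary_layer_correction[OF p L PL \<delta>, where a = a and \<rho> = \<rho> and c = c1])
  define F where "F = (\<lambda>x. c1 + integral {0..x} f)"
  obtain Fs where Fs: "deriv_chain 2 L F Fs" "Fs 0 = F" "Fs 1 = f"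
    unfolding F_def using L by (metis deriv_chain_primitive_polynomial[OF f(1)] less_imp_le)
  then have "has_weak_deriv_on L F f"
    unfolding deriv_chain_def by (metis One_nat_def less_2_cases_iff)
  then have Fc: "continuous_on {0..L} F" by (rule has_weak_deriv_on_imp_continuous)
  define w1 where "w1 = (\<lambda>x. w 0 + integral {0..x} F)"
  define ws where "ws = case_nat w1 Fs"
  have ch: "deriv_chain 3 L w1 ws"
    using deriv_chain_primitive[OF Fs(1,2) Fc, of "w 0"] L unfolding ws_def w1_def by simp
  have ws: "ws 0 = w1" "ws 1 = F" "ws 2 = f"
    unfolding ws_def using Fs by (simp_all add: numeral_2_eq_2)
  have wd: "wderiv 3 L 1 w1 x = F x" "wderiv 3 L 2 w1 x = f x" if "x \<in> {0..L}" for x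
    using wderiv_eq_deriv_chain[OF ch L _ that] ws by auto
  have wc1: "wderiv 2 L 1 w 0 = c1"
    using wderiv_eq_deriv_chain[OF dw L, of 1 0] L unfolding c1_def by simp
  have "\<forall>j<2. dw j 0 = ws j 0"
    using dw L ws unfolding w1_def F_def c1_def deriv_chain_def by (auto simp: less_2_cases_iff)
  then have "(sobolev_norm 2 L (\<lambda>x. w x - w1 x))^2 \<le> (1 + L^2 + L^4) * L2_sqnorm L (\<lambda>x. dw 2 x - f x)"
    using sobolev_norm_diff_sq_le[OF dw deriv_chain_le[OF ch] _ L] ws by (simp add: eval_nat_numeral)
  also have "\<dots> < e"
  proof (rule mult_less_of_less_divide[where C = "L^4 + L^2 + 1"])
    have "L2_sqnorm L (\<lambda>x. dw 2 x - f x) \<le> 2 * L2_sqnorm L (\<lambda>x. dw 2 x - p x) + 2 * L2_sqnorm L (\<lambda>x. p x - f x)"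
      using L2_sqnorm_triangle[OF dw2] p f(1) by (simp add: L2_on_continuous continuous_on_polymonial_function)
    with pw pf have "L2_sqnorm L (\<lambda>x. dw 2 x - f x) < \<delta>" by linarith
    then show "L2_sqnorm L (\<lambda>x. dw 2 x - f x) < e / (L^4 + L^2 + 1)"
      unfolding \<delta>_def .
  qed (use C in \<open>simp_all add: L2_sqnorm_nonneg\<close>)
  finally have "(sobolev_norm 2 L (\<lambda>x. w x - w1 x))^2 < e" .
  moreover have "w1 \<in> sobolev 3 L" using ch unfolding sobolev_def by blast
  moreover have "\<rho> * wderiv 3 L 1 w1 L + PL * wderiv 3 L 2 w1 L = 0"
    using wd[of L] L bc by (simp add: F_def)
  moreover have "wderiv 3 L 1 w1 0 = wderiv 2 L 1 w 0" "wderiv 3 L 2 w1 0 = a" "w1 0 = w 0"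
    using wd[of 0] L wc1 f(2) by (simp_all add: F_def w1_def)
  ultimately show ?thesis using that by blast
qed

theorem lemma2p5:
  fixes L P0 th1 th2 th3 th4 :: real and P :: "real \<Rightarrow> real"
    and HH DA :: "((real \<Rightarrow> complex) \<times> (real \<Rightarrow> complex) \<times> complex \<times> complex) set"
  assumes "L > 0" and "P0 > 0"
    and "(\<lambda>x. complex_of_real (P x)) \<in> sobolev 2 L"
    and "\<forall>x\<in>{0..L}. P x \<ge> P0"
  defines "HH \<equiv> {(w, v, xi, psi). w \<in> sobolev 2 L \<and> v \<in> sobolev 1 L \<and> xi = v L \<and> psi = v 0}"
    and "DA \<equiv> {(w, v, xi, psi). w \<in> sobolev 3 L \<and> v \<in> sobolev 2 L \<and> xi = v L \<and> psi = v 0 \<and>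
           wderiv 2 L 1 (\<lambda>x. complex_of_real (P x)) L * wderiv 3 L 1 w L
             + complex_of_real (P L) * wderiv 3 L 2 w L = - wderiv 3 L 1 w L \<and>
           wderiv 2 L 1 (\<lambda>x. complex_of_real (P x)) 0 * wderiv 3 L 1 w 0
             + complex_of_real (P 0) * wderiv 3 L 2 w 0
             = complex_of_real th1 * v 0 + complex_of_real th2 * wderiv 2 L 1 v 0
               + complex_of_real th3 * w 0 + complex_of_real th4 * wderiv 3 L 1 w 0}"
  shows "\<forall>(w, v, xi, psi)\<in>HH. \<forall>e>0. \<exists>(w1, v1, xi1, psi1)\<in>DA.
           sqrt ((sobolev_norm 2 L (\<lambda>x. w x - w1 x))^2 + (sobolev_norm 1 L (\<lambda>x. v x - v1 x))^2
                 + (cmod (xi - xi1))^2 + (cmod (psi - psi1))^2) < e"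
proof -
  have "P0 \<le> P L" "P0 \<le> P 0"
    using assms(1,4) by auto
  then have PL: "0 < P L" and P0: "0 < P 0"
    using assms(2) by linarith+
  define P' where "P' = wderiv 2 L 1 (\<lambda>x. complex_of_real (P x))"
  have "\<exists>(w1, v1, xi1, psi1)\<in>DA.
      sqrt ((sobolev_norm 2 L (\<lambda>x. w x - w1 x))^2 + (sobolev_norm 1 L (\<lambda>x. v x - v1 x))^2
        + (cmod (v L - xi1))^2 + (cmod (v 0 - psi1))^2) < e"
    if w: "w \<in> sobolev 2 L" and v: "v \<in> sobolev 1 L" and e: "0 < e" for w v e
  proof -
    have e3: "0 < e^2 / 3" using e by simp
    obtain v1 where v1: "v1 \<in> sobolev 2 L" "v1 0 = v 0"
      and nv: "(sobolev_norm 1 L (\<lambda>x. v x - v1 x))^2 < e^2 / 3" and nL: "(cmod (v L - v1 L))^2 < e^2 / 3"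
      by (rule sobolev_1_approx_by_sobolev_2[OF v assms(1) e3])
    \<comment> \<open>the boundary condition at 0, solved for w1''(0)\<close>
    define a where "a = (th1 * v 0 + th2 * wderiv 2 L 1 v1 0 + th3 * w 0
      + th4 * wderiv 2 L 1 w 0 - P' 0 * wderiv 2 L 1 w 0) / P 0"
    obtain w1 where w1: "w1 \<in> sobolev 3 L" "w1 0 = w 0" "wderiv 3 L 1 w1 0 = wderiv 2 L 1 w 0"
      "wderiv 3 L 2 w1 0 = a" "(1 + P' L) * wderiv 3 L 1 w1 L + P L * wderiv 3 L 2 w1 L = 0"
      and nw: "(sobolev_norm 2 L (\<lambda>x. w x - w1 x))^2 < e^2 / 3"
      by (rule sobolev_2_approx_by_sobolev_3[OF w assms(1) PL e3])
    have "(w1, v1, v1 L, v1 0) \<in> DA"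
      unfolding DA_def P'_def[symmetric] using w1 v1 P0
      by (simp add: a_def field_simps eq_neg_iff_add_eq_0)
    moreover have "sqrt ((sobolev_norm 2 L (\<lambda>x. w x - w1 x))^2 + (sobolev_norm 1 L (\<lambda>x. v x - v1 x))^2
        + (cmod (v L - v1 L))^2 + (cmod (v 0 - v1 0))^2) < sqrt (e^2)"
      using nw nv nL v1(2) by (intro real_sqrt_less_mono) simp
    ultimately show ?thesis using e by auto
  qed
  then show ?thesis unfolding HH_def by auto
qed

end
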